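(* If $C$ and $D$ are finite connected racks such that $b(C)=b(D)$ in the Burnside ring $\mathrm{B}(\mathcal{R})$ of finite racks, then $C\cong D$ as racks.
   Context: A rack is a set $R$ with a binary operation $\rhd$ such that every left multiplication $\ell_a\colon b\mapsto a\rhd b$ is a bijection and $a\rhd(b\rhd c)=(a\rhd b)\rhd(a\rhd c)$ for all $a,b,c$. The inner automorphism group $\mathrm{Inn}(R)$ is the subgroup of the symmetric group on $R$ generated by all $\ell_a$. A rack is connected if it is non-empty and $\mathrm{Inn}(R)$ acts transitively on $R$. A subrack of $R$ is a subset $S$ with $\ell_s(S)=S$ for all $s\in S$. A decomposition of $R$ into $S$ and $T$ means that $S,T$ are disjoint subracks (possibly empty) with $S\cup T=R$. The Burnside ring of finite racks $\mathrm{B}(\mathcal{R})$ is the abelian group generated by symbols $b(R)$, one for each finite rack $R$, subject to the relations $b(R_1)=b(R_2)$ whenever $R_1\cong R_2$, and $b(R)=b(S)+b(T)$ whenever $R$ decomposes into subracks $S$ and $T$. *)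

theory Defs
  imports Main
begin

text \<open>A rack is given by a carrier set together with a binary operation
  (values of the operation outside the carrier are irrelevant).
  Finite racks are taken with carrier a subset of nat; every finite rack is
  isomorphic to such a one.\<close>

type_synonym rk = "nat set \<times> (nat \<Rightarrow> nat \<Rightarrow> nat)"

definition is_rack :: "'a set \<Rightarrow> ('a \<Rightarrow> 'a \<Rightarrow> 'a) \<Rightarrow> bool" where
  "is_rack R op \<longleftrightarrow>
     (\<forall>a\<in>R. bij_betw (op a) R R) \<and>
     (\<forall>a\<in>R. \<forall>b\<in>R. \<forall>c\<in>R. op a (op b c) = op (op a b) (op a c))"

text \<open>Orbit of x under the group generated by the left multiplications
  and their inverses (i.e. under Inn(R)).\<close>
inductive_set inn_orbit :: "'a set \<Rightarrow> ('a \<Rightarrow> 'a \<Rightarrow> 'a) \<Rightarrow> 'a \<Rightarrow> 'a set"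
  for R op x where
  base: "x \<in> inn_orbit R op x"
| left: "y \<in> inn_orbit R op x \<Longrightarrow> a \<in> R \<Longrightarrow> op a y \<in> inn_orbit R op x"
| left_inv: "y \<in> inn_orbit R op x \<Longrightarrow> a \<in> R \<Longrightarrow>
      the_inv_into R (op a) y \<in> inn_orbit R op x"

definition connected_rack :: "'a set \<Rightarrow> ('a \<Rightarrow> 'a \<Rightarrow> 'a) \<Rightarrow> bool" where
  "connected_rack R op \<longleftrightarrow> R \<noteq> {} \<and> (\<forall>x\<in>R. \<forall>y\<in>R. y \<in> inn_orbit R op x)"

definition subrack :: "'a set \<Rightarrow> 'a set \<Rightarrow> ('a \<Rightarrow> 'a \<Rightarrow> 'a) \<Rightarrow> bool" where
  "subrack S R op \<longleftrightarrow> S \<subseteq> R \<and> (\<forall>s\<in>S. op s ` S = S)"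

definition rack_iso ::
  "'a set \<Rightarrow> ('a \<Rightarrow> 'a \<Rightarrow> 'a) \<Rightarrow> 'b set \<Rightarrow> ('b \<Rightarrow> 'b \<Rightarrow> 'b) \<Rightarrow> bool" where
  "rack_iso R op R' op' \<longleftrightarrow>
     (\<exists>f. bij_betw f R R' \<and> (\<forall>a\<in>R. \<forall>b\<in>R. f (op a b) = op' (f a) (f b)))"

text \<open>Free abelian group on the symbols b(R): functions rk \<Rightarrow> int
  (of finite support); the generator b(R) is the indicator of R.\<close>
definition gen :: "rk \<Rightarrow> rk \<Rightarrow> int" where
  "gen k = (\<lambda>j. if j = k then 1 else 0)"

definition fin_rack :: "rk \<Rightarrow> bool" where
  "fin_rack k \<longleftrightarrow> finite (fst k) \<and> is_rack (fst k) (snd k)"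

definition burnside_rels :: "(rk \<Rightarrow> int) set" where
  "burnside_rels =
     {(\<lambda>j. gen R1 j - gen R2 j) | R1 R2.
        fin_rack R1 \<and> fin_rack R2 \<and> rack_iso (fst R1) (snd R1) (fst R2) (snd R2)}
   \<union> {(\<lambda>j. gen (R, op) j - gen (S, op) j - gen (T, op) j) | R op S T.
        fin_rack (R, op) \<and> subrack S R op \<and> subrack T R op \<and>
        S \<inter> T = {} \<and> S \<union> T = R}"

inductive_set burnside_span :: "(rk \<Rightarrow> int) set" where
  zero: "(\<lambda>j. 0) \<in> burnside_span"
| rel: "x \<in> burnside_rels \<Longrightarrow> x \<in> burnside_span"
| diff: "x \<in> burnside_span \<Longrightarrow> y \<in> burnside_span \<Longrightarrow> (\<lambda>j. x j - y j) \<in> burnside_span"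

definition burnside_eq :: "rk \<Rightarrow> rk \<Rightarrow> bool" where
  "burnside_eq C D \<longleftrightarrow> (\<lambda>j. gen C j - gen D j) \<in> burnside_span"

end

theory Submission
  imports Defs "HOL-Library.FuncSet"
begin

text \<open>For a finite connected rack X, the number of injective rack homomorphisms
  X \<rightarrow> R is invariant under isomorphism and additive under decompositions of R:
  the left multiplications of R preserve both parts of a decomposition, so the
  connected image of X lies in one of them. Hence it induces a homomorphism
  B(R) \<rightarrow> \<int>. If b(C) = b(D) with C, D connected, evaluating at X = C and X = D
  yields embeddings C \<rightarrow> D and D \<rightarrow> C, which for finite racks forces an
  isomorphism.\<close>

lemma rack_op_closed: "is_rack R op \<Longrightarrow> a \<in> R \<Longrightarrow> b \<in> R \<Longrightarrow> op a b \<in> R"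
  unfolding is_rack_def by (meson bij_betwE)

lemma rack_left_inj: "is_rack R op \<Longrightarrow> a \<in> R \<Longrightarrow> inj_on (op a) R"
  unfolding is_rack_def bij_betw_def by blast

lemma rack_left_inverse:
  assumes "is_rack R op" "a \<in> R" "y \<in> R"
  shows "the_inv_into R (op a) y \<in> R" "op a (the_inv_into R (op a) y) = y"
proof -
  have bij: "bij_betw (op a) R R" using assms(1,2) unfolding is_rack_def by blast
  show "the_inv_into R (op a) y \<in> R" using bij_betw_the_inv_into[OF bij] assms(3) bij_betwE by blast
  show "op a (the_inv_into R (op a) y) = y" using f_the_inv_into_f_bij_betw[OF bij] assms(3) by blast
qed

lemma decomposition_left_mult_mem_iff:
  assumes "is_rack R op" "subrack S R op" "subrack T R op" "S \<inter> T = {}" "S \<union> T = R"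
    and "a \<in> R" "z \<in> R"
  shows "op a z \<in> S \<longleftrightarrow> z \<in> S"
proof -
  have inj: "inj_on (op a) R" using rack_left_inj[OF assms(1,6)] .
  have image_mem_iff: "op a z \<in> op a ` P \<longleftrightarrow> z \<in> P" if "P \<subseteq> R" for P
    using inj_on_image_mem_iff[OF inj assms(7) that] .
  consider "a \<in> S" | "a \<in> T" using assms(5,6) by blast
  then show ?thesis
  proof cases
    case 1
    then have "op a ` S = S" using assms(2) unfolding subrack_def by blast
    moreover have "S \<subseteq> R" using assms(5) by blast
    ultimately show ?thesis using image_mem_iff[of S] by simp
  next
    case 2
    then have "op a ` T = T" using assms(3) unfolding subrack_def by blast
    moreover have "T \<subseteq> R" using assms(5) by blast
    ultimately have "op a z \<in> T \<longleftrightarrow> z \<in> T" using image_mem_iff[of T] by simp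
    moreover have "op a z \<in> R" using rack_op_closed[OF assms(1,6,7)] .
    ultimately show ?thesis using assms(4,5,7) by blast
  qed
qed

lemma hom_inn_orbit_invariant:
  assumes "is_rack A opA" "x \<in> A" "g ` A \<subseteq> R"
    and hom: "\<forall>a\<in>A. \<forall>b\<in>A. g (opA a b) = op (g a) (g b)"
    and invariant: "\<And>a z. a \<in> R \<Longrightarrow> z \<in> R \<Longrightarrow> P (op a z) \<longleftrightarrow> P z"
    and "y \<in> inn_orbit A opA x"
  shows "y \<in> A \<and> (P (g y) \<longleftrightarrow> P (g x))"
  using assms(6)
proof (induction rule: inn_orbit.induct)
  case base
  then show ?case using assms(2) by simp
next
  case (left y a)
  then have "opA a y \<in> A" "g (opA a y) = op (g a) (g y)"
    using rack_op_closed[OF assms(1)] hom by auto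
  moreover have "P (op (g a) (g y)) \<longleftrightarrow> P (g y)"
    using invariant left assms(3) by blast
  ultimately show ?case using left.IH by simp
next
  case (left_inv y a)
  define w where "w = the_inv_into A (opA a) y"
  have w: "w \<in> A" "opA a w = y"
    using rack_left_inverse[OF assms(1)] left_inv unfolding w_def by auto
  then have "g y = op (g a) (g w)" using hom left_inv.hyps(2) by blast
  moreover have "P (op (g a) (g w)) \<longleftrightarrow> P (g w)"
    using invariant left_inv.hyps(2) w(1) assms(3) by blast
  ultimately show ?case using left_inv.IH w unfolding w_def by simp
qed

lemma connected_hom_image_in_part:
  assumes "is_rack A opA" "connected_rack A opA" "g ` A \<subseteq> R"
    and "\<forall>a\<in>A. \<forall>b\<in>A. g (opA a b) = op (g a) (g b)"
    and "is_rack R op" "subrack S R op" "subrack T R op" "S \<inter> T = {}" "S \<union> T = R"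
  shows "g ` A \<subseteq> S \<or> g ` A \<subseteq> T"
proof -
  obtain x where x: "x \<in> A" and orbit: "\<forall>y\<in>A. y \<in> inn_orbit A opA x"
    using assms(2) unfolding connected_rack_def by blast
  have "g y \<in> S \<longleftrightarrow> g x \<in> S" if "y \<in> A" for y
    using hom_inn_orbit_invariant[where P = "\<lambda>z. z \<in> S", OF assms(1) x assms(3,4)
        decomposition_left_mult_mem_iff[OF assms(5-9)]] orbit that
    by blast
  then show ?thesis using assms(3,9) by blast
qed

definition rack_embeddings ::
  "'a set \<Rightarrow> ('a \<Rightarrow> 'a \<Rightarrow> 'a) \<Rightarrow> 'b set \<Rightarrow> ('b \<Rightarrow> 'b \<Rightarrow> 'b) \<Rightarrow> ('a \<Rightarrow> 'b) set" where
  "rack_embeddings A opA B opB =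
     {g \<in> A \<rightarrow>\<^sub>E B. inj_on g A \<and> (\<forall>a\<in>A. \<forall>b\<in>A. g (opA a b) = opB (g a) (g b))}"

lemma finite_rack_embeddings: "finite A \<Longrightarrow> finite B \<Longrightarrow> finite (rack_embeddings A opA B opB)"
  unfolding rack_embeddings_def by (rule finite_subset[OF _ finite_PiE]) auto

lemma rack_embeddings_mono: "B \<subseteq> C \<Longrightarrow> rack_embeddings A opA B op \<subseteq> rack_embeddings A opA C op"
  unfolding rack_embeddings_def using PiE_mono[of A "\<lambda>_. B" "\<lambda>_. C"] by blast

lemma rack_embeddings_restrict_id: "is_rack A opA \<Longrightarrow> restrict id A \<in> rack_embeddings A opA A opA"
  unfolding rack_embeddings_def by (auto simp: rack_op_closed)

lemma rack_embeddings_comp: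
  assumes "is_rack A opA" "g \<in> rack_embeddings A opA B opB" "f \<in> rack_embeddings B opB C opC"
  shows "restrict (f \<circ> g) A \<in> rack_embeddings A opA C opC"
proof -
  have g: "g ` A \<subseteq> B" "inj_on g A" "\<forall>a\<in>A. \<forall>b\<in>A. g (opA a b) = opB (g a) (g b)"
    using assms(2) unfolding rack_embeddings_def by auto
  have f: "f ` B \<subseteq> C" "inj_on f B" "\<forall>a\<in>B. \<forall>b\<in>B. f (opB a b) = opC (f a) (f b)"
    using assms(3) unfolding rack_embeddings_def by auto
  have "restrict (f \<circ> g) A \<in> A \<rightarrow>\<^sub>E C" using g(1) f(1) by (auto simp: image_subset_iff)
  moreover have "inj_on (restrict (f \<circ> g) A) A"
    using comp_inj_on[OF g(2) inj_on_subset[OF f(2) g(1)]] by (simp add: inj_on_def)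
  moreover have "restrict (f \<circ> g) A (opA a b) = opC (restrict (f \<circ> g) A a) (restrict (f \<circ> g) A b)"
    if "a \<in> A" "b \<in> A" for a b
    using that g(1,3) f(3) rack_op_closed[OF assms(1) that] by (auto simp: image_subset_iff)
  ultimately show ?thesis unfolding rack_embeddings_def by blast
qed

lemma rack_embeddings_decomposition:
  assumes "is_rack A opA" "connected_rack A opA"
    and "is_rack R op" "subrack S R op" "subrack T R op" "S \<inter> T = {}" "S \<union> T = R"
  shows "rack_embeddings A opA R op = rack_embeddings A opA S op \<union> rack_embeddings A opA T op"
    and "rack_embeddings A opA S op \<inter> rack_embeddings A opA T op = {}"
proof -
  have "g \<in> rack_embeddings A opA S op \<union> rack_embeddings A opA T op"
    if g: "g \<in> rack_embeddings A opA R op" for g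
  proof -
    have "g ` A \<subseteq> S \<or> g ` A \<subseteq> T"
      using g connected_hom_image_in_part[OF assms(1,2) _ _ assms(3-7)]
      unfolding rack_embeddings_def by blast
    then show ?thesis using g unfolding rack_embeddings_def by auto
  qed
  moreover have "rack_embeddings A opA P op \<subseteq> rack_embeddings A opA R op" if "P \<subseteq> R" for P
    using rack_embeddings_mono[OF that] .
  ultimately show "rack_embeddings A opA R op = rack_embeddings A opA S op \<union> rack_embeddings A opA T op"
    using assms(7) by blast
  obtain x where "x \<in> A" using assms(2) unfolding connected_rack_def by blast
  then have "g x \<in> S \<inter> T"
    if "g \<in> rack_embeddings A opA S op" "g \<in> rack_embeddings A opA T op" for g
    using that unfolding rack_embeddings_def by (auto dest: PiE_mem)
  then show "rack_embeddings A opA S op \<inter> rack_embeddings A opA T op = {}"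
    using assms(6) by blast
qed

lemma card_rack_embeddings_mono:
  assumes "is_rack A opA" "finite A" "finite C" "f \<in> rack_embeddings B opB C opC"
  shows "card (rack_embeddings A opA B opB) \<le> card (rack_embeddings A opA C opC)"
proof (rule card_inj_on_le)
  let ?compose = "\<lambda>g. restrict (f \<circ> g) A"
  show "?compose ` rack_embeddings A opA B opB \<subseteq> rack_embeddings A opA C opC"
    using rack_embeddings_comp[OF assms(1) _ assms(4)] by blast
  have "inj_on f B" using assms(4) unfolding rack_embeddings_def by blast
  show "inj_on ?compose (rack_embeddings A opA B opB)"
  proof (rule inj_onI)
    fix g1 g2
    assume g: "g1 \<in> rack_embeddings A opA B opB" "g2 \<in> rack_embeddings A opA B opB"
      and eq: "?compose g1 = ?compose g2"
    show "g1 = g2"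
    proof (rule extensionalityI[of _ A])
      show "g1 \<in> extensional A" "g2 \<in> extensional A"
        using g unfolding rack_embeddings_def by (auto simp: PiE_def)
      fix x assume "x \<in> A"
      then have "f (g1 x) = f (g2 x)" "g1 x \<in> B" "g2 x \<in> B"
        using fun_cong[OF eq, of x] g unfolding rack_embeddings_def by auto
      then show "g1 x = g2 x" using \<open>inj_on f B\<close> by (simp add: inj_on_eq_iff)
    qed
  qed
  show "finite (rack_embeddings A opA C opC)"
    using finite_rack_embeddings[OF assms(2,3)] .
qed

lemma rack_iso_imp_embedding:
  assumes "is_rack R op" "rack_iso R op B opB"
  shows "rack_embeddings R op B opB \<noteq> {}"
proof -
  obtain f where f: "bij_betw f R B" "\<forall>a\<in>R. \<forall>b\<in>R. f (op a b) = opB (f a) (f b)"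
    using assms(2) unfolding rack_iso_def by blast
  have "restrict f R \<in> rack_embeddings R op B opB"
    using f bij_betwE[OF f(1)] rack_op_closed[OF assms(1)]
    unfolding rack_embeddings_def bij_betw_def inj_on_def by auto
  then show ?thesis by blast
qed

lemma rack_iso_sym:
  assumes "is_rack R op" "rack_iso R op B opB"
  shows "rack_iso B opB R op"
proof -
  obtain f where f: "bij_betw f R B" "\<forall>a\<in>R. \<forall>b\<in>R. f (op a b) = opB (f a) (f b)"
    using assms(2) unfolding rack_iso_def by blast
  let ?g = "the_inv_into R f"
  have g: "bij_betw ?g B R" using bij_betw_the_inv_into[OF f(1)] .
  have "?g (opB a b) = op (?g a) (?g b)" if "a \<in> B" "b \<in> B" for a b
  proof -
    have "?g a \<in> R" "?g b \<in> R" using g that bij_betwE by blast+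
    moreover have "f (?g a) = a" "f (?g b) = b"
      using f_the_inv_into_f_bij_betw[OF f(1)] that by auto
    ultimately have "f (op (?g a) (?g b)) = opB a b" "op (?g a) (?g b) \<in> R"
      using f(2) rack_op_closed[OF assms(1)] by metis+
    then show ?thesis using the_inv_into_f_eq[OF bij_betw_imp_inj_on[OF f(1)]] by metis
  qed
  then show ?thesis using g unfolding rack_iso_def by blast
qed

lemma rack_iso_of_embeddings:
  assumes "finite A" "finite B"
    and "g \<in> rack_embeddings A opA B opB" "h \<in> rack_embeddings B opB A opA"
  shows "rack_iso A opA B opB"
proof -
  have g: "inj_on g A" "g ` A \<subseteq> B" and h: "inj_on h B" "h ` B \<subseteq> A"
    using assms(3,4) unfolding rack_embeddings_def by auto
  have "card B \<le> card A" using card_inj_on_le[OF h assms(1)] .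
  then have "g ` A = B" using card_subset_eq[OF assms(2) g(2)] card_image[OF g(1)]
    card_inj_on_le[OF g assms(2)] by simp
  then have "bij_betw g A B" using g(1) unfolding bij_betw_def by blast
  then show ?thesis using assms(3) unfolding rack_iso_def rack_embeddings_def by blast
qed

definition embedding_count :: "rk \<Rightarrow> rk \<Rightarrow> nat" where
  "embedding_count X R = card (rack_embeddings (fst X) (snd X) (fst R) (snd R))"

lemma embedding_count_self_pos: "fin_rack X \<Longrightarrow> 0 < embedding_count X X"
  unfolding embedding_count_def fin_rack_def
  using rack_embeddings_restrict_id finite_rack_embeddings by (metis card_gt_0_iff empty_iff)

lemma embedding_count_iso:
  assumes "fin_rack X" "fin_rack R1" "fin_rack R2" "rack_iso (fst R1) (snd R1) (fst R2) (snd R2)"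
  shows "embedding_count X R1 = embedding_count X R2"
proof -
  have X: "is_rack (fst X) (snd X)" "finite (fst X)" using assms(1) unfolding fin_rack_def by auto
  have R: "is_rack (fst R1) (snd R1)" "finite (fst R1)" "is_rack (fst R2) (snd R2)" "finite (fst R2)"
    using assms(2,3) unfolding fin_rack_def by auto
  obtain f where "f \<in> rack_embeddings (fst R1) (snd R1) (fst R2) (snd R2)"
    using rack_iso_imp_embedding[OF R(1) assms(4)] by blast
  moreover obtain f' where "f' \<in> rack_embeddings (fst R2) (snd R2) (fst R1) (snd R1)"
    using rack_iso_imp_embedding[OF R(3) rack_iso_sym[OF R(1) assms(4)]] by blast
  ultimately show ?thesis
    unfolding embedding_count_def using card_rack_embeddings_mono[OF X] R(2,4) by (meson le_antisym)
qed

lemma embedding_count_decomposition: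
  assumes "fin_rack X" "connected_rack (fst X) (snd X)"
    and "fin_rack (R, op)" "subrack S R op" "subrack T R op" "S \<inter> T = {}" "S \<union> T = R"
  shows "embedding_count X (R, op) = embedding_count X (S, op) + embedding_count X (T, op)"
proof -
  have X: "is_rack (fst X) (snd X)" "finite (fst X)" using assms(1) unfolding fin_rack_def by auto
  have R: "is_rack R op" "finite S" "finite T" using assms(3,7) unfolding fin_rack_def by auto
  note decomposition = rack_embeddings_decomposition[OF X(1) assms(2) R(1) assms(4-7)]
  show ?thesis
    unfolding embedding_count_def fst_conv snd_conv decomposition(1)
    using card_Un_disjoint[OF finite_rack_embeddings finite_rack_embeddings decomposition(2)] X(2) R(2,3)
    by blast
qed

definition embedding_character :: "rk \<Rightarrow> (rk \<Rightarrow> int) \<Rightarrow> int" where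
  "embedding_character X x = (\<Sum>j | x j \<noteq> 0. x j * int (embedding_count X j))"

lemma embedding_character_eq_sum:
  assumes "finite U" "{j. x j \<noteq> 0} \<subseteq> U"
  shows "embedding_character X x = (\<Sum>j\<in>U. x j * int (embedding_count X j))"
  unfolding embedding_character_def
  by (rule sum.mono_neutral_left) (use assms finite_subset in auto)

lemma finite_support_gen: "finite {j. gen k j \<noteq> 0}"
  by (simp add: gen_def)

lemma finite_support_diff:
  "finite {j. x j \<noteq> 0} \<Longrightarrow> finite {j. y j \<noteq> 0} \<Longrightarrow> finite {j. x j - y j \<noteq> (0::int)}"
  by (rule finite_subset[of _ "{j. x j \<noteq> 0} \<union> {j. y j \<noteq> 0}"]) auto

lemma embedding_character_gen: "embedding_character X (gen k) = int (embedding_count X k)"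
  by (subst embedding_character_eq_sum[of "{k}"]) (auto simp: gen_def)

lemma embedding_character_diff:
  assumes "finite {j. x j \<noteq> 0}" "finite {j. y j \<noteq> 0}"
  shows "embedding_character X (\<lambda>j. x j - y j) = embedding_character X x - embedding_character X y"
proof -
  let ?U = "{j. x j \<noteq> 0} \<union> {j. y j \<noteq> 0}"
  have U: "finite ?U" using assms by simp
  have "embedding_character X (\<lambda>j. x j - y j) = (\<Sum>j\<in>?U. (x j - y j) * int (embedding_count X j))"
    by (rule embedding_character_eq_sum[OF U]) auto
  also have "\<dots> = (\<Sum>j\<in>?U. x j * int (embedding_count X j)) - (\<Sum>j\<in>?U. y j * int (embedding_count X j))"
    by (simp add: left_diff_distrib sum_subtractf)
  also have "\<dots> = embedding_character X x - embedding_character X y"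
    using embedding_character_eq_sum[OF U, of x] embedding_character_eq_sum[OF U, of y] by auto
  finally show ?thesis .
qed

lemma embedding_character_diff_gen:
  "finite {j. x j \<noteq> 0} \<Longrightarrow>
    embedding_character X (\<lambda>j. x j - gen k j) = embedding_character X x - int (embedding_count X k)"
  using embedding_character_diff[OF _ finite_support_gen] embedding_character_gen by simp

lemma burnside_span_finite_support: "x \<in> burnside_span \<Longrightarrow> finite {j. x j \<noteq> 0}"
proof (induction rule: burnside_span.induct)
  case zero
  then show ?case by simp
next
  case (rel x)
  then show ?case
    unfolding burnside_rels_def
    by (elim UnE CollectE exE conjE; hypsubst; intro finite_support_diff finite_support_gen)
next
  case (diff x y)
  show ?case by (intro finite_support_diff diff.IH)
qed

lemma embedding_character_burnside_span:
  assumes "fin_rack X" "connected_rack (fst X) (snd X)" "x \<in> burnside_span"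
  shows "embedding_character X x = 0"
  using assms(3)
proof (induction rule: burnside_span.induct)
  case zero
  then show ?case by (simp add: embedding_character_def)
next
  case (rel x)
  note gen_diff_gen = embedding_character_diff_gen[OF finite_support_gen, unfolded embedding_character_gen]
  from rel show ?case unfolding burnside_rels_def
  proof (elim UnE CollectE exE conjE)
    fix R1 R2
    assume "x = (\<lambda>j. gen R1 j - gen R2 j)" "fin_rack R1" "fin_rack R2"
      "rack_iso (fst R1) (snd R1) (fst R2) (snd R2)"
    then show ?thesis using embedding_count_iso[OF assms(1)] gen_diff_gen by simp
  next
    fix R op S T
    assume x: "x = (\<lambda>j. gen (R, op) j - gen (S, op) j - gen (T, op) j)" and decomposition:
      "fin_rack (R, op)" "subrack S R op" "subrack T R op" "S \<inter> T = {}" "S \<union> T = R"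
    have "embedding_character X x
        = embedding_character X (\<lambda>j. gen (R, op) j - gen (S, op) j) - int (embedding_count X (T, op))"
      unfolding x
      by (rule embedding_character_diff_gen[OF finite_support_diff[OF finite_support_gen finite_support_gen]])
    then show ?thesis
      using embedding_count_decomposition[OF assms(1,2) decomposition] gen_diff_gen by simp
  qed
next
  case (diff x y)
  then show ?case by (simp add: embedding_character_diff burnside_span_finite_support)
qed

lemma embedding_count_eq_of_burnside_eq:
  assumes "fin_rack X" "connected_rack (fst X) (snd X)" "burnside_eq C D"
  shows "embedding_count X C = embedding_count X D"
  using embedding_character_burnside_span[OF assms(1,2) assms(3)[unfolded burnside_eq_def]]
    embedding_character_diff_gen[OF finite_support_gen, unfolded embedding_character_gen]
  by simp

theorem theorem4p2:
  fixes C D :: rk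
  assumes "fin_rack C" and "fin_rack D"
    and "connected_rack (fst C) (snd C)" and "connected_rack (fst D) (snd D)"
    and "burnside_eq C D"
  shows "rack_iso (fst C) (snd C) (fst D) (snd D)"
proof -
  have "0 < embedding_count C D"
    using embedding_count_self_pos[OF assms(1)] embedding_count_eq_of_burnside_eq[OF assms(1,3,5)]
    by simp
  moreover have "0 < embedding_count D C"
    using embedding_count_self_pos[OF assms(2)] embedding_count_eq_of_burnside_eq[OF assms(2,4,5)]
    by simp
  ultimately obtain g h where
    "g \<in> rack_embeddings (fst C) (snd C) (fst D) (snd D)"
    "h \<in> rack_embeddings (fst D) (snd D) (fst C) (snd C)"
    unfolding embedding_count_def by (auto simp: card_gt_0_iff)
  moreover have "finite (fst C)" "finite (fst D)" using assms(1,2) unfolding fin_rack_def by auto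
  ultimately show ?thesis using rack_iso_of_embeddings by blast
qed

end
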